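(* Let $n\in\mathbb{N}$, $\tau\in(0,\infty)$, and let $\mu$ be an isotropic log-concave probability measure on $\mathbb{R}^n$ with density $\rho$ and isotropic constant $1$. Let $m_\rho=\max\rho$ and $K=\{x\in\mathbb{R}^n:\rho(x)\ge e^{-\tau}m_\rho\}$. Then for every $x\in K$, $$|x|^2\le c_n(\tau)(n+1)^2e^\tau,\qquad c_n(\tau)=n\int_1^\infty t^{n-1}e^{-\tau t}\,dt+1.$$
   Context: A log-concave probability measure on $\mathbb{R}^n$ with density $\rho$ means $\rho=e^{-V}$ with $V$ convex. It is isotropic with isotropic constant $L_\mu$ if $\int(x,\theta)\mu(dx)=0$ and $\int(x,\theta)^2\mu(dx)=L_\mu^2|\theta|^2$ for all $\theta\in\mathbb{R}^n$. *)

theory Defs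
  imports "HOL-Probability.Probability"
begin

text \<open>A log-concave density: rho = exp(-V) with V convex and extended-real valued,
  i.e. V = -ln rho on the (convex) support {rho > 0} and V = +infinity outside.\<close>
definition log_concave_density :: "('a::euclidean_space \<Rightarrow> real) \<Rightarrow> bool" where
  "log_concave_density \<rho> \<longleftrightarrow>
     \<rho> \<in> borel_measurable borel \<and> (\<forall>x. 0 \<le> \<rho> x) \<and>
     convex {x. 0 < \<rho> x} \<and> convex_on {x. 0 < \<rho> x} (\<lambda>x. - ln (\<rho> x))"

definition isotropic_with_const :: "'a::euclidean_space measure \<Rightarrow> real \<Rightarrow> bool" where
  "isotropic_with_const \<mu> L \<longleftrightarrow>
     (\<forall>\<theta>::'a. integrable \<mu> (\<lambda>x. x \<bullet> \<theta>) \<and> (\<integral>x. x \<bullet> \<theta> \<partial>\<mu>) = 0 \<and>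
              integrable \<mu> (\<lambda>x. (x \<bullet> \<theta>)\<^sup>2) \<and> (\<integral>x. (x \<bullet> \<theta>)\<^sup>2 \<partial>\<mu>) = L\<^sup>2 * (norm \<theta>)\<^sup>2)"

end

theory Submission
  imports Defs
begin

(*
  Let n = DIM('a), l = n / (n + 1) and let x lie in K. Log-concavity together with
  rho <= max rho gives rho ((1 - l) x + l y) >= exp (-tau) powr (1 - l) * rho y for every y.
  Substituting z = (1 - l) x + l y in the isotropy identity |x|^2 = int rho z (z . x)^2 dz
  therefore yields
    |x|^2 >= l^n exp (-tau / (n + 1)) int rho y ((1 - l) |x|^2 + l (y . x))^2 dy
          >= l^n exp (-tau / (n + 1)) (1 - l)^2 |x|^4,
  because the measure is centred; hence |x|^2 <= (n + 1)^2 (1 + 1/n)^n exp (tau / (n + 1)).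
  Bernoulli's inequality gives int_1^oo t^(n-1) exp (-tau t) dt >= exp (-tau) (1/tau + (n-1)/tau^2),
  and with this lower bound on c_n(tau) an elementary estimate shows
  (1 + 1/n)^n exp (tau / (n + 1)) <= c_n(tau) exp tau.
  That rho is bounded at all follows from the same rescaling argument with l = 1/2.
*)

lemma nn_integral_lborel_affine:
  fixes t :: "'a::euclidean_space" and f :: "'a \<Rightarrow> ennreal"
  assumes [measurable]: "f \<in> borel_measurable borel" and c: "c \<noteq> 0"
  shows "(\<integral>\<^sup>+x. f x \<partial>lborel) = ennreal (\<bar>c\<bar> ^ DIM('a)) * (\<integral>\<^sup>+x. f (t + c *\<^sub>R x) \<partial>lborel)"
  by (subst lborel_affine[OF c, of t])
     (simp add: nn_integral_density nn_integral_distr nn_integral_cmult)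

lemma integral_le_rescaled:
  fixes t :: "'a::euclidean_space" and F G :: "'a \<Rightarrow> real"
  assumes F: "integrable lborel F" and G: "integrable lborel G" and l: "0 < l"
    and F_nonneg: "\<And>w. 0 \<le> F w" and le: "\<And>w. F w \<le> G (t + l *\<^sub>R w)"
  shows "l ^ DIM('a) * integral\<^sup>L lborel F \<le> integral\<^sup>L lborel G"
proof -
  have G_nonneg: "0 \<le> G z" for z
    using F_nonneg[of "(z - t) /\<^sub>R l"] le[of "(z - t) /\<^sub>R l"] l by simp
  have [measurable]: "F \<in> borel_measurable borel" "G \<in> borel_measurable borel"
    using F G by auto
  have "ennreal (l ^ DIM('a)) * (\<integral>\<^sup>+x. F x \<partial>lborel)
      \<le> ennreal (l ^ DIM('a)) * (\<integral>\<^sup>+x. G (t + l *\<^sub>R x) \<partial>lborel)"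
    by (intro mult_left_mono nn_integral_mono ennreal_leI le) auto
  also have "\<dots> = (\<integral>\<^sup>+x. G x \<partial>lborel)"
    using nn_integral_lborel_affine[of "\<lambda>x. ennreal (G x)" l t] l by simp
  finally have "ennreal (l ^ DIM('a) * integral\<^sup>L lborel F) \<le> ennreal (integral\<^sup>L lborel G)"
    using F G F_nonneg G_nonneg l by (simp add: nn_integral_eq_integral ennreal_mult')
  then show ?thesis
    using G G_nonneg by (subst (asm) ennreal_le_iff) (auto intro: integral_nonneg_AE)
qed

lemma prob_space_densityD:
  fixes f :: "'a::euclidean_space \<Rightarrow> real"
  assumes prob: "prob_space (density lborel (\<lambda>x. ennreal (f x)))"
    and [measurable]: "f \<in> borel_measurable borel" and nonneg: "\<And>x. 0 \<le> f x"
  shows "integrable lborel f" "integral\<^sup>L lborel f = 1"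
proof -
  have total: "(\<integral>\<^sup>+x. ennreal (f x) \<partial>lborel) = 1"
    using prob_space.emeasure_space_1[OF prob] by (simp add: emeasure_density)
  show int: "integrable lborel f"
    using total nonneg by (intro integrableI_nonneg) auto
  have "ennreal (integral\<^sup>L lborel f) = 1"
    using total int nonneg by (simp add: nn_integral_eq_integral)
  then show "integral\<^sup>L lborel f = 1"
    using nonneg by (simp add: integral_nonneg_AE)
qed

lemma isotropic_densityD:
  fixes f :: "'a::euclidean_space \<Rightarrow> real"
  assumes iso: "isotropic_with_const (density lborel (\<lambda>x. ennreal (f x))) L"
    and [measurable]: "f \<in> borel_measurable borel" and nonneg: "\<And>x. 0 \<le> f x"
  shows "integrable lborel (\<lambda>y. f y * (y \<bullet> \<theta>))"
    and "integral\<^sup>L lborel (\<lambda>y. f y * (y \<bullet> \<theta>)) = 0"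
    and "integrable lborel (\<lambda>y. f y * (y \<bullet> \<theta>)\<^sup>2)"
    and "integral\<^sup>L lborel (\<lambda>y. f y * (y \<bullet> \<theta>)\<^sup>2) = L\<^sup>2 * (norm \<theta>)\<^sup>2"
  using iso nonneg unfolding isotropic_with_const_def
  by (simp_all add: integrable_density integral_density)

lemma log_concave_density_nonneg: "log_concave_density \<rho> \<Longrightarrow> 0 \<le> \<rho> x"
  and log_concave_density_measurable: "log_concave_density \<rho> \<Longrightarrow> \<rho> \<in> borel_measurable borel"
  unfolding log_concave_density_def by auto

lemma log_concave_density_powr_le:
  assumes "log_concave_density \<rho>" "0 < \<rho> a" "0 < \<rho> b" "0 \<le> l" "l \<le> 1"
  shows "\<rho> a powr (1 - l) * \<rho> b powr l \<le> \<rho> ((1 - l) *\<^sub>R a + l *\<^sub>R b)"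
proof -
  have cv: "convex_on {x. 0 < \<rho> x} (\<lambda>x. - ln (\<rho> x))" and cs: "convex {x. 0 < \<rho> x}"
    using assms(1) unfolding log_concave_density_def by auto
  have pos: "0 < \<rho> ((1 - l) *\<^sub>R a + l *\<^sub>R b)"
    using convexD[OF cs, of a b "1 - l" l] assms by auto
  have "- ln (\<rho> ((1 - l) *\<^sub>R a + l *\<^sub>R b)) \<le> (1 - l) * (- ln (\<rho> a)) + l * (- ln (\<rho> b))"
    using convex_onD[OF cv, of l a b] assms by auto
  then have "(1 - l) * ln (\<rho> a) + l * ln (\<rho> b) \<le> ln (\<rho> ((1 - l) *\<^sub>R a + l *\<^sub>R b))"
    by simp
  then have "exp ((1 - l) * ln (\<rho> a) + l * ln (\<rho> b)) \<le> \<rho> ((1 - l) *\<^sub>R a + l *\<^sub>R b)"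
    using pos by (metis exp_le_cancel_iff exp_ln)
  then show ?thesis
    using assms by (simp add: powr_def exp_add mult.commute)
qed

lemma log_concave_density_midpoint_ge:
  assumes lc: "log_concave_density \<rho>"
  shows "sqrt (\<rho> y) * min (\<rho> w) 1 \<le> \<rho> ((1/2) *\<^sub>R y + (1/2) *\<^sub>R w)"
proof (cases "0 < \<rho> y \<and> 0 < \<rho> w")
  case False
  then have "sqrt (\<rho> y) * min (\<rho> w) 1 = 0"
    using log_concave_density_nonneg[OF lc, of y] log_concave_density_nonneg[OF lc, of w]
    by (auto simp: min_def)
  then show ?thesis
    by (simp only:) (rule log_concave_density_nonneg[OF lc])
next
  case True
  have "min (\<rho> w) 1 \<le> sqrt (\<rho> w)"
    using True by (cases "\<rho> w \<le> 1") (auto intro: real_le_rsqrt simp: power2_eq_square mult_left_le)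
  then have "sqrt (\<rho> y) * min (\<rho> w) 1 \<le> \<rho> y powr (1 - 1/2) * \<rho> w powr (1/2)"
    using True by (simp add: powr_half_sqrt mult_left_mono)
  also have "\<dots> \<le> \<rho> ((1/2) *\<^sub>R y + (1/2) *\<^sub>R w)"
    using log_concave_density_powr_le[OF lc, of y w "1/2"] True by simp
  finally show ?thesis .
qed

lemma log_concave_density_bdd_above:
  fixes \<rho> :: "'a::euclidean_space \<Rightarrow> real"
  assumes lc: "log_concave_density \<rho>" and int: "integrable lborel \<rho>"
    and pos: "0 < integral\<^sup>L lborel \<rho>"
  shows "bdd_above (range \<rho>)"
proof -
  note nn = log_concave_density_nonneg[OF lc]
  note [measurable] = log_concave_density_measurable[OF lc]
  define m where "m = (\<lambda>x. min (\<rho> x) 1)"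
  have int_m: "integrable lborel m"
    unfolding m_def by (rule Bochner_Integration.integrable_bound[OF int]) (auto simp: nn)
  have m_nonneg: "0 \<le> m x" for x
    using nn by (simp add: m_def)
  define c where "c = integral\<^sup>L lborel m"
  have "c \<noteq> 0"
  proof
    assume "c = 0"
    then have "AE x in lborel. m x = 0"
      using integral_nonneg_eq_0_iff_AE[OF int_m] m_nonneg c_def by auto
    then have "AE x in lborel. \<rho> x = 0"
      by eventually_elim (use nn in \<open>auto simp: m_def min_def split: if_splits\<close>)
    then show False
      using pos integral_cong_AE[of \<rho> lborel "\<lambda>_. 0"] by auto
  qed
  moreover have "0 \<le> c"
    unfolding c_def by (rule integral_nonneg_AE) (simp add: m_nonneg)
  ultimately have c_pos: "0 < c"
    by simp
  have "\<rho> y \<le> (2 ^ DIM('a) * integral\<^sup>L lborel \<rho> / c)\<^sup>2" for y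
  proof -
    have "(1/2) ^ DIM('a) * integral\<^sup>L lborel (\<lambda>w. sqrt (\<rho> y) * m w) \<le> integral\<^sup>L lborel \<rho>"
    proof (rule integral_le_rescaled[where t="(1/2) *\<^sub>R y"])
      show "sqrt (\<rho> y) * m w \<le> \<rho> ((1/2) *\<^sub>R y + (1/2) *\<^sub>R w)" for w
        using log_concave_density_midpoint_ge[OF lc] unfolding m_def .
    qed (use int int_m m_nonneg nn in auto)
    then have "sqrt (\<rho> y) \<le> 2 ^ DIM('a) * integral\<^sup>L lborel \<rho> / c"
      using c_pos by (simp add: c_def field_simps power_divide)
    then have "(sqrt (\<rho> y))\<^sup>2 \<le> (2 ^ DIM('a) * integral\<^sup>L lborel \<rho> / c)\<^sup>2"
      using nn[of y] by (intro power_mono) auto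
    then show ?thesis
      using nn[of y] by simp
  qed
  then show ?thesis
    by (intro bdd_aboveI) auto
qed

lemma log_concave_density_ge_scaled:
  assumes lc: "log_concave_density \<rho>" and le_m: "\<And>y. \<rho> y \<le> m"
    and c: "0 < c" and x: "c * m \<le> \<rho> x" and l: "0 \<le> l" "l < 1"
  shows "c powr (1 - l) * \<rho> y \<le> \<rho> ((1 - l) *\<^sub>R x + l *\<^sub>R y)"
proof (cases "0 < \<rho> y")
  case False
  then have "\<rho> y = 0"
    using log_concave_density_nonneg[OF lc, of y] by simp
  then show ?thesis
    using log_concave_density_nonneg[OF lc] by simp
next
  case True
  then have m_pos: "0 < m"
    using le_m[of y] by linarith
  have x_pos: "0 < \<rho> x"
    using mult_pos_pos[OF c m_pos] x by linarith
  have "c powr (1 - l) * \<rho> y = (c * m) powr (1 - l) * (\<rho> y * m powr (l - 1))"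
    using m_pos c by (simp add: powr_mult field_simps powr_add[symmetric])
  also have "\<dots> \<le> \<rho> x powr (1 - l) * (\<rho> y * \<rho> y powr (l - 1))"
    using x le_m[of y] True l c m_pos
    by (intro mult_mono mult_left_mono powr_mono2 powr_mono2') auto
  also have "\<dots> = \<rho> x powr (1 - l) * \<rho> y powr l"
    using True by (simp add: powr_add[symmetric] powr_mult_base)
  also have "\<dots> \<le> \<rho> ((1 - l) *\<^sub>R x + l *\<^sub>R y)"
    using log_concave_density_powr_le[OF lc x_pos True] l by simp
  finally show ?thesis .
qed

lemma log_concave_norm_sq_le_param:
  fixes \<rho> :: "'a::euclidean_space \<Rightarrow> real" and x :: 'a
  assumes lc: "log_concave_density \<rho>"
    and int0: "integrable lborel \<rho>" and total: "integral\<^sup>L lborel \<rho> = 1"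
    and int1: "integrable lborel (\<lambda>y. \<rho> y * (y \<bullet> x))"
    and mean: "integral\<^sup>L lborel (\<lambda>y. \<rho> y * (y \<bullet> x)) = 0"
    and int2: "integrable lborel (\<lambda>y. \<rho> y * (y \<bullet> x)\<^sup>2)"
    and var: "integral\<^sup>L lborel (\<lambda>y. \<rho> y * (y \<bullet> x)\<^sup>2) = (norm x)\<^sup>2"
    and le_m: "\<And>y. \<rho> y \<le> m" and c: "0 < c" and x: "c * m \<le> \<rho> x"
    and l: "0 < l" "l < 1"
  shows "l ^ DIM('a) * c powr (1 - l) * (1 - l)\<^sup>2 * (norm x)\<^sup>2 \<le> 1"
proof -
  define M where "M = (norm x)\<^sup>2"
  define E where "E = c powr (1 - l)"
  define R where "R y = E * \<rho> y * ((1 - l) * M + l * (y \<bullet> x))\<^sup>2" for y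
  have R_expand: "R = (\<lambda>y. E * ((1 - l)\<^sup>2 * M\<^sup>2 * \<rho> y + 2 * (1 - l) * l * M * (\<rho> y * (y \<bullet> x))
      + l\<^sup>2 * (\<rho> y * (y \<bullet> x)\<^sup>2)))"
    by (auto simp: R_def fun_eq_iff power2_eq_square algebra_simps)
  have "l ^ DIM('a) * integral\<^sup>L lborel R \<le> integral\<^sup>L lborel (\<lambda>z. \<rho> z * (z \<bullet> x)\<^sup>2)"
  proof (rule integral_le_rescaled[where t="(1 - l) *\<^sub>R x"])
    show "R y \<le> \<rho> ((1 - l) *\<^sub>R x + l *\<^sub>R y) * (((1 - l) *\<^sub>R x + l *\<^sub>R y) \<bullet> x)\<^sup>2" for y
    proof -
      have "((1 - l) *\<^sub>R x + l *\<^sub>R y) \<bullet> x = (1 - l) * M + l * (y \<bullet> x)"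
        by (simp add: M_def inner_add_left power2_norm_eq_inner)
      then show ?thesis
        unfolding R_def E_def
        using log_concave_density_ge_scaled[OF lc le_m c x] l by (simp add: mult_right_mono)
    qed
    show "0 \<le> R y" for y
      unfolding R_def E_def using log_concave_density_nonneg[OF lc] by simp
  qed (use int0 int1 int2 l in \<open>auto simp: R_expand\<close>)
  then have "l ^ DIM('a) * (E * ((1 - l)\<^sup>2 * M\<^sup>2 + l\<^sup>2 * M)) \<le> M"
    using int0 int1 int2 total mean var by (simp add: R_expand M_def)
  moreover have "l ^ DIM('a) * E * (1 - l)\<^sup>2 * M * M \<le> l ^ DIM('a) * (E * ((1 - l)\<^sup>2 * M\<^sup>2 + l\<^sup>2 * M))"
    using l by (simp add: E_def M_def power2_eq_square algebra_simps)
  ultimately have "M * (l ^ DIM('a) * E * (1 - l)\<^sup>2 * M) \<le> M * 1"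
    by (simp add: mult_ac)
  then show ?thesis
    by (cases "M = 0") (auto simp: E_def M_def mult_le_cancel_left_pos)
qed

lemma log_concave_norm_sq_le:
  fixes \<rho> :: "'a::euclidean_space \<Rightarrow> real" and x :: 'a
  assumes lc: "log_concave_density \<rho>"
    and int0: "integrable lborel \<rho>" and total: "integral\<^sup>L lborel \<rho> = 1"
    and int1: "integrable lborel (\<lambda>y. \<rho> y * (y \<bullet> x))"
    and mean: "integral\<^sup>L lborel (\<lambda>y. \<rho> y * (y \<bullet> x)) = 0"
    and int2: "integrable lborel (\<lambda>y. \<rho> y * (y \<bullet> x)\<^sup>2)"
    and var: "integral\<^sup>L lborel (\<lambda>y. \<rho> y * (y \<bullet> x)\<^sup>2) = (norm x)\<^sup>2"
    and le_m: "\<And>y. \<rho> y \<le> m" and x: "exp (- \<tau>) * m \<le> \<rho> x"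
  shows "(norm x)\<^sup>2 \<le> (real DIM('a) + 1)\<^sup>2 * ((1 + 1 / real DIM('a)) ^ DIM('a) * exp (\<tau> / (real DIM('a) + 1)))"
proof -
  define n where "n = real DIM('a)"
  have n: "1 \<le> n"
    unfolding n_def using DIM_positive[where 'a='a] by linarith
  define l where "l = n / (n + 1)"
  have l: "0 < l" "l < 1"
    using n by (auto simp: l_def)
  define P where "P = (n + 1)\<^sup>2 * ((1 + 1 / n) ^ DIM('a) * exp (\<tau> / (n + 1)))"
  have P_pos: "0 < P"
    using n by (auto simp: P_def add_pos_nonneg intro!: mult_pos_pos zero_less_power)
  have one_minus_l: "1 - l = 1 / (n + 1)"
    using n by (simp add: l_def field_simps)
  have "l ^ DIM('a) = 1 / (1 + 1 / n) ^ DIM('a)"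
    using n by (simp add: l_def power_one_over field_simps)
  moreover have "exp (- \<tau>) powr (1 - l) = 1 / exp (\<tau> / (n + 1))"
    unfolding exp_powr_real one_minus_l by (simp add: exp_minus inverse_eq_divide)
  moreover have "(1 - l)\<^sup>2 = 1 / (n + 1)\<^sup>2"
    unfolding one_minus_l by (simp add: power_one_over)
  ultimately have "l ^ DIM('a) * exp (- \<tau>) powr (1 - l) * (1 - l)\<^sup>2 = 1 / P"
    by (simp add: P_def)
  moreover have "l ^ DIM('a) * exp (- \<tau>) powr (1 - l) * (1 - l)\<^sup>2 * (norm x)\<^sup>2 \<le> 1"
    by (rule log_concave_norm_sq_le_param[OF lc int0 total int1 mean int2 var le_m _ x l]) simp
  ultimately show ?thesis
    using P_pos by (simp add: P_def n_def)
qed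

lemma nn_integral_linear_exp_Ici:
  fixes \<tau> a b :: real
  assumes \<tau>: "0 < \<tau>" and a: "0 \<le> a" and b: "0 \<le> b"
  shows "(\<integral>\<^sup>+s. ennreal (indicator {0..} s * ((a + b * s) * exp (- \<tau> * s))) \<partial>lborel)
    = ennreal (a / \<tau> + b / \<tau>\<^sup>2)"
proof -
  have "(\<integral>\<^sup>+s. ennreal (indicator {0..} s * ((a + b * s) * exp (- \<tau> * s))) \<partial>lborel)
    = (\<integral>\<^sup>+s. ennreal (a / \<tau>) * ennreal (erlang_density 0 \<tau> s * s ^ 0)
        + ennreal (b / \<tau>) * ennreal (erlang_density 0 \<tau> s * s ^ 1) \<partial>lborel)"
  proof (intro nn_integral_cong)
    fix s :: real
    show "ennreal (indicator {0..} s * ((a + b * s) * exp (- \<tau> * s)))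
      = ennreal (a / \<tau>) * ennreal (erlang_density 0 \<tau> s * s ^ 0)
        + ennreal (b / \<tau>) * ennreal (erlang_density 0 \<tau> s * s ^ 1)"
      using \<tau> a b
      by (cases "0 \<le> s")
         (auto simp: erlang_density_def ennreal_mult'[symmetric] ennreal_plus[symmetric]
            algebra_simps simp del: ennreal_plus)
  qed
  also have "\<dots> = ennreal (a / \<tau>) * 1 + ennreal (b / \<tau>) * ennreal (1 / \<tau>)"
    using nn_integral_erlang_ith_moment[OF \<tau>, of 0 0] nn_integral_erlang_ith_moment[OF \<tau>, of 0 1]
    by (simp add: nn_integral_add nn_integral_cmult divide_ennreal \<tau>)
  also have "\<dots> = ennreal (a / \<tau> + b / \<tau>\<^sup>2)"
    using \<tau> a b by (simp add: ennreal_mult'[symmetric] ennreal_plus[symmetric] power2_eq_square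
        del: ennreal_plus)
  finally show ?thesis .
qed

lemma set_integrable_power_exp_Ici:
  fixes \<tau> :: real
  assumes \<tau>: "0 < \<tau>"
  shows "set_integrable lborel {0..} (\<lambda>t. t ^ k * exp (- \<tau> * t))"
  unfolding set_integrable_def
proof (rule integrableI_nonneg)
  have "(\<integral>\<^sup>+t. ennreal (indicator {0..} t *\<^sub>R (t ^ k * exp (- \<tau> * t))) \<partial>lborel)
    = (\<integral>\<^sup>+t. ennreal (fact k / \<tau> ^ Suc k) * ennreal (erlang_density k \<tau> t * t ^ 0) \<partial>lborel)"
    using \<tau> by (intro nn_integral_cong)
      (auto simp: erlang_density_def ennreal_mult'[symmetric] indicator_def)
  also have "\<dots> = ennreal (fact k / \<tau> ^ Suc k)"
    using nn_integral_erlang_ith_moment[OF \<tau>, of k 0] by (simp add: nn_integral_cmult)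
  finally show "(\<integral>\<^sup>+t. ennreal (indicator {0..} t *\<^sub>R (t ^ k * exp (- \<tau> * t))) \<partial>lborel) < \<infinity>"
    by simp
qed (auto simp: indicator_def)

lemma power_exp_tail_integral_ge:
  fixes \<tau> :: real
  assumes \<tau>: "0 < \<tau>"
  shows "exp (- \<tau>) * (1 / \<tau> + real k / \<tau>\<^sup>2) \<le> (LBINT t:{1..}. t ^ k * exp (- \<tau> * t))"
proof -
  define F where "F t = indicator {1..} t *\<^sub>R (t ^ k * exp (- \<tau> * t))" for t :: real
  have int_F: "integrable lborel F"
    unfolding F_def using set_integrable_subset[OF set_integrable_power_exp_Ici[OF \<tau>]]
    by (simp add: set_integrable_def)
  have F_nonneg: "0 \<le> F t" for t
    by (simp add: F_def indicator_def)
  have "ennreal (exp (- \<tau>) * (1 / \<tau> + real k / \<tau>\<^sup>2))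
    = (\<integral>\<^sup>+s. ennreal (indicator {0..} s * ((exp (- \<tau>) + exp (- \<tau>) * real k * s) * exp (- \<tau> * s))) \<partial>lborel)"
    using \<tau> by (subst nn_integral_linear_exp_Ici) (auto simp: field_simps)
  also have "\<dots> \<le> (\<integral>\<^sup>+s. ennreal (F (1 + s)) \<partial>lborel)"
  proof (intro nn_integral_mono ennreal_leI)
    fix s :: real
    show "indicator {0..} s * ((exp (- \<tau>) + exp (- \<tau>) * real k * s) * exp (- \<tau> * s)) \<le> F (1 + s)"
    proof (cases "0 \<le> s")
      case True
      have "1 + real k * s \<le> (1 + s) ^ k"
        using True by (intro Bernoulli_inequality) auto
      then have "exp (- \<tau> * (1 + s)) * (1 + real k * s) \<le> exp (- \<tau> * (1 + s)) * (1 + s) ^ k"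
        by (intro mult_left_mono) auto
      then show ?thesis
        using True by (simp add: F_def algebra_simps exp_add[symmetric])
    qed (simp add: F_nonneg)
  qed
  also have "\<dots> = (\<integral>\<^sup>+t. ennreal (F t) \<partial>lborel)"
    using int_F by (subst nn_integral_real_affine[of _ 1 1]) auto
  also have "\<dots> = ennreal (integral\<^sup>L lborel F)"
    using int_F F_nonneg by (simp add: nn_integral_eq_integral)
  finally have "exp (- \<tau>) * (1 / \<tau> + real k / \<tau>\<^sup>2) \<le> integral\<^sup>L lborel F"
    using F_nonneg by (subst (asm) ennreal_le_iff) (auto intro: integral_nonneg_AE)
  then show ?thesis
    unfolding set_lebesgue_integral_def F_def .
qed

lemma two_exp_half_le:
  fixes \<tau> :: real
  assumes "0 < \<tau>"
  shows "2 * exp (\<tau> / 2) \<le> exp \<tau> + 1 / \<tau>"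
proof -
  define y where "y = exp (\<tau> / 2)"
  have "\<tau> / 2 \<le> y - 1"
    using exp_ge_add_one_self[of "\<tau> / 2"] unfolding y_def by linarith
  then have "(\<tau> / 2)\<^sup>2 \<le> (y - 1)\<^sup>2"
    using assms by (intro power_mono) auto
  moreover have "1 - \<tau>\<^sup>2 / 4 \<le> 1 / \<tau>"
  proof -
    have "0 \<le> \<tau> * (\<tau> - 1)\<^sup>2 + 2 * (\<tau> - 5 / 4)\<^sup>2 + 7 / 8"
      using assms by simp
    then have "(1 - \<tau>\<^sup>2 / 4) * \<tau> \<le> 1"
      by (simp add: power2_eq_square algebra_simps)
    then show ?thesis
      using pos_le_divide_eq[OF assms] by simp
  qed
  moreover have "2 * y = y\<^sup>2 + 1 - (y - 1)\<^sup>2" "(\<tau> / 2)\<^sup>2 = \<tau>\<^sup>2 / 4"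
    by (simp_all add: power2_eq_square algebra_simps)
  ultimately have "2 * y \<le> y\<^sup>2 + 1 / \<tau>"
    by linarith
  moreover have "y\<^sup>2 = exp \<tau>"
    unfolding y_def by (simp add: power2_eq_square exp_add[symmetric])
  ultimately show ?thesis
    unfolding y_def by simp
qed

lemma exp_one_plus_third_le:
  fixes \<tau> :: real
  assumes \<tau>: "0 < \<tau>"
  shows "exp (1 + \<tau> / 3) \<le> exp \<tau> + 2 / \<tau> + 2 / \<tau>\<^sup>2"
proof (cases "3 / 2 \<le> \<tau>")
  case True
  then have "exp (1 + \<tau> / 3) \<le> exp \<tau>"
    by simp
  then show ?thesis
    using \<tau> by (simp add: add_increasing2)
next
  case False
  have "exp (1 + \<tau> / 3) \<le> exp (3 / 2)"
    using False by simp
  also have "\<dots> \<le> 46 / 10"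
  proof (rule power2_le_imp_le)
    have "(exp (3 / 2 :: real))\<^sup>2 = exp 1 ^ 3"
      by (simp flip: exp_of_nat_mult exp_of_nat2_mult)
    also have "\<dots> \<le> (272 / 100) ^ 3"
      using e_less_272 by (intro power_mono) auto
    also have "\<dots> \<le> (46 / 10)\<^sup>2"
      by (simp add: power2_eq_square power3_eq_cube)
    finally show "(exp (3 / 2 :: real))\<^sup>2 \<le> (46 / 10)\<^sup>2" .
  qed simp
  also have "\<dots> \<le> 1 + (\<tau> + 2 / \<tau>) + 2 / \<tau>\<^sup>2"
  proof -
    have "14 / 5 \<le> \<tau> + 2 / \<tau>"
    proof -
      have "14 / 5 * \<tau> \<le> \<tau>\<^sup>2 + 2"
        using zero_le_power2[of "\<tau> - 7 / 5"] by (simp add: power2_eq_square algebra_simps)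
      then show ?thesis
        using \<tau> by (simp add: field_simps power2_eq_square)
    qed
    moreover have "8 / 9 \<le> 2 / \<tau>\<^sup>2"
      using False \<tau> power_mono[of \<tau> "3 / 2" 2] by (simp add: field_simps)
    ultimately show ?thesis
      by simp
  qed
  also have "\<dots> \<le> exp \<tau> + 2 / \<tau> + 2 / \<tau>\<^sup>2"
    using exp_ge_add_one_self[of \<tau>] by simp
  finally show ?thesis .
qed

lemma one_plus_inverse_power_exp_le:
  fixes \<tau> :: real
  assumes n: "1 \<le> n" and \<tau>: "0 < \<tau>"
  shows "(1 + 1 / real n) ^ n * exp (\<tau> / (real n + 1))
    \<le> exp \<tau> + real n / \<tau> + real n * (real n - 1) / \<tau>\<^sup>2"
proof (cases "n = 1")
  case True
  then show ?thesis
    using two_exp_half_le[OF \<tau>] by simp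
next
  case False
  then have n: "2 \<le> n"
    using n by simp
  have "(1 + 1 / real n) ^ n \<le> exp 1"
    using n by (intro exp_ge_one_plus_x_over_n_power_n) auto
  moreover have "exp (\<tau> / (real n + 1)) \<le> exp (\<tau> / 3)"
    using n \<tau> by (intro exp_mono divide_left_mono) auto
  ultimately have "(1 + 1 / real n) ^ n * exp (\<tau> / (real n + 1)) \<le> exp (1 + \<tau> / 3)"
    by (simp add: exp_add mult_mono)
  also have "\<dots> \<le> exp \<tau> + 2 / \<tau> + 2 / \<tau>\<^sup>2"
    by (rule exp_one_plus_third_le[OF \<tau>])
  also have "\<dots> \<le> exp \<tau> + real n / \<tau> + real n * (real n - 1) / \<tau>\<^sup>2"
  proof -
    have "2 * 1 \<le> real n * (real n - 1)"
      using n by (intro mult_mono) auto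
    then show ?thesis
      using n \<tau> by (intro add_mono divide_right_mono) auto
  qed
  finally show ?thesis .
qed

lemma one_plus_inverse_power_exp_le_tail_integral:
  fixes \<tau> :: real
  assumes n: "1 \<le> n" and \<tau>: "0 < \<tau>"
  shows "(1 + 1 / real n) ^ n * exp (\<tau> / (real n + 1))
    \<le> (real n * (LBINT t:{1..}. t ^ (n - 1) * exp (- \<tau> * t)) + 1) * exp \<tau>"
proof -
  have "real n * exp \<tau> * (exp (- \<tau>) * (1 / \<tau> + real (n - 1) / \<tau>\<^sup>2))
      \<le> real n * exp \<tau> * (LBINT t:{1..}. t ^ (n - 1) * exp (- \<tau> * t))"
    using power_exp_tail_integral_ge[OF \<tau>] by (intro mult_left_mono) auto
  moreover have "real n * exp \<tau> * (exp (- \<tau>) * (1 / \<tau> + real (n - 1) / \<tau>\<^sup>2))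
      = real n / \<tau> + real n * (real n - 1) / \<tau>\<^sup>2"
  proof -
    have "exp \<tau> * exp (- \<tau>) = 1"
      by (simp add: exp_minus_inverse)
    moreover have "real (n - 1) = real n - 1"
      using n by simp
    ultimately show ?thesis
      by (simp add: algebra_simps add_divide_distrib)
  qed
  ultimately show ?thesis
    using one_plus_inverse_power_exp_le[OF n \<tau>] by (simp add: algebra_simps)
qed

theorem lemma3p2:
  fixes \<rho> :: "'a::euclidean_space \<Rightarrow> real" and \<tau> :: real
  assumes tau_pos: "0 < \<tau>"
    and logconc: "log_concave_density \<rho>"
    and prob: "prob_space (density lborel (\<lambda>x. ennreal (\<rho> x)))"
    and iso: "isotropic_with_const (density lborel (\<lambda>x. ennreal (\<rho> x))) 1"
    and x_in_K: "\<rho> x \<ge> exp (- \<tau>) * (SUP y. \<rho> y)"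
  shows "(norm x)\<^sup>2 \<le>
     (real DIM('a) * (LBINT t:{1..}. t ^ (DIM('a) - 1) * exp (- \<tau> * t)) + 1)
       * (real DIM('a) + 1)\<^sup>2 * exp \<tau>"
proof -
  note density = log_concave_density_measurable[OF logconc] log_concave_density_nonneg[OF logconc]
  note total = prob_space_densityD[OF prob density]
  have moments: "integrable lborel (\<lambda>y. \<rho> y * (y \<bullet> x))"
    "integral\<^sup>L lborel (\<lambda>y. \<rho> y * (y \<bullet> x)) = 0"
    "integrable lborel (\<lambda>y. \<rho> y * (y \<bullet> x)\<^sup>2)"
    "integral\<^sup>L lborel (\<lambda>y. \<rho> y * (y \<bullet> x)\<^sup>2) = (norm x)\<^sup>2"
    using isotropic_densityD[OF iso density, of x] by simp_all
  have "bdd_above (range \<rho>)"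
    using log_concave_density_bdd_above[OF logconc total(1)] total(2) by simp
  then have le_sup: "\<rho> y \<le> (SUP y. \<rho> y)" for y
    by (rule cSUP_upper[OF UNIV_I])
  have "(norm x)\<^sup>2 \<le> (real DIM('a) + 1)\<^sup>2
      * ((1 + 1 / real DIM('a)) ^ DIM('a) * exp (\<tau> / (real DIM('a) + 1)))"
    by (rule log_concave_norm_sq_le[OF logconc total moments le_sup x_in_K])
  also have "\<dots> \<le> (real DIM('a) + 1)\<^sup>2
      * ((real DIM('a) * (LBINT t:{1..}. t ^ (DIM('a) - 1) * exp (- \<tau> * t)) + 1) * exp \<tau>)"
    using one_plus_inverse_power_exp_le_tail_integral[OF _ tau_pos, of "DIM('a)"] DIM_positive[where 'a='a]
    by (intro mult_left_mono) auto
  finally show ?thesis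
    by (simp add: mult_ac)
qed

end
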